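(* The class of right normal bands with intersection and update is a proper quasivariety (it is not closed under homomorphic images, hence not axiomatisable by identities), and so is the class of 1-stacks with intersection and update.
   Context: A right normal band is a semigroup $(A,\circ)$ with $x\circ x=x$ and $(x\circ y)\circ z=(y\circ x)\circ z$. A right normal band with intersection $(A,\circ,\cap)$: right normal band $(A,\circ)$, semilattice $(A,\cap)$, $(x\cap y)\circ x=x\cap y$, $x\circ(y\cap z)=(x\circ y)\cap z$. A right normal band with intersection and update $(A,\circ,\cap,\diamond)$: a right normal band with intersection satisfying $s=(s\diamond t)\circ s$, $s\diamond t=s\diamond(s\diamond t)$, $s\circ t=t\circ(s\diamond t)$, and the quasi-identity $(x\cap(x\diamond y))\circ a=(x\cap(x\diamond y))\circ b\ \&\ y\circ a=y\circ b\Rightarrow x\circ a=x\circ b$. A 1-stack with intersection and update $(A,\cdot,\circ,\cap,\diamond)$: $(A,\circ,\cap,\diamond)$ a right normal band with intersection and update, $\cdot$ associative (juxtaposition), $a\circ(bc)=(a\circ b)c$, $a(b\circ c)=ab\circ ac$, $s(t\cap u)=st\cap su$, $s(t\diamond u)=st\diamond su$. *)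

theory Defs
  imports Main
begin

(* Algebras are given by a carrier set A together with operations on the ambient type.
   c = \<circ> (composition), i = \<inter> (intersection), u = \<diamond> (update), m = juxtaposition. *)

definition closed2 :: "'a set \<Rightarrow> ('a \<Rightarrow> 'a \<Rightarrow> 'a) \<Rightarrow> bool" where
  "closed2 A f \<longleftrightarrow> (\<forall>x\<in>A. \<forall>y\<in>A. f x y \<in> A)"

definition right_normal_band :: "'a set \<Rightarrow> ('a \<Rightarrow> 'a \<Rightarrow> 'a) \<Rightarrow> bool" where
  "right_normal_band A c \<longleftrightarrow> closed2 A c \<and>
     (\<forall>x\<in>A. \<forall>y\<in>A. \<forall>z\<in>A. c (c x y) z = c x (c y z)) \<and>
     (\<forall>x\<in>A. c x x = x) \<and>
     (\<forall>x\<in>A. \<forall>y\<in>A. \<forall>z\<in>A. c (c x y) z = c (c y x) z)"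

definition semilattice_on :: "'a set \<Rightarrow> ('a \<Rightarrow> 'a \<Rightarrow> 'a) \<Rightarrow> bool" where
  "semilattice_on A i \<longleftrightarrow> closed2 A i \<and>
     (\<forall>x\<in>A. \<forall>y\<in>A. \<forall>z\<in>A. i (i x y) z = i x (i y z)) \<and>
     (\<forall>x\<in>A. \<forall>y\<in>A. i x y = i y x) \<and>
     (\<forall>x\<in>A. i x x = x)"

definition rnb_intersection :: "'a set \<Rightarrow> ('a \<Rightarrow> 'a \<Rightarrow> 'a) \<Rightarrow> ('a \<Rightarrow> 'a \<Rightarrow> 'a) \<Rightarrow> bool" where
  "rnb_intersection A c i \<longleftrightarrow> right_normal_band A c \<and> semilattice_on A i \<and>
     (\<forall>x\<in>A. \<forall>y\<in>A. c (i x y) x = i x y) \<and>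
     (\<forall>x\<in>A. \<forall>y\<in>A. \<forall>z\<in>A. c x (i y z) = i (c x y) z)"

definition rnb_intersection_update ::
  "'a set \<Rightarrow> ('a \<Rightarrow> 'a \<Rightarrow> 'a) \<Rightarrow> ('a \<Rightarrow> 'a \<Rightarrow> 'a) \<Rightarrow> ('a \<Rightarrow> 'a \<Rightarrow> 'a) \<Rightarrow> bool" where
  "rnb_intersection_update A c i u \<longleftrightarrow> rnb_intersection A c i \<and> closed2 A u \<and>
     (\<forall>s\<in>A. \<forall>t\<in>A. s = c (u s t) s) \<and>
     (\<forall>s\<in>A. \<forall>t\<in>A. u s t = u s (u s t)) \<and>
     (\<forall>s\<in>A. \<forall>t\<in>A. c s t = c t (u s t)) \<and>
     (\<forall>x\<in>A. \<forall>y\<in>A. \<forall>a\<in>A. \<forall>b\<in>A.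
        c (i x (u x y)) a = c (i x (u x y)) b \<and> c y a = c y b \<longrightarrow> c x a = c x b)"

definition one_stack_iu ::
  "'a set \<Rightarrow> ('a \<Rightarrow> 'a \<Rightarrow> 'a) \<Rightarrow> ('a \<Rightarrow> 'a \<Rightarrow> 'a) \<Rightarrow> ('a \<Rightarrow> 'a \<Rightarrow> 'a) \<Rightarrow> ('a \<Rightarrow> 'a \<Rightarrow> 'a) \<Rightarrow> bool" where
  "one_stack_iu A m c i u \<longleftrightarrow> rnb_intersection_update A c i u \<and> closed2 A m \<and>
     (\<forall>x\<in>A. \<forall>y\<in>A. \<forall>z\<in>A. m (m x y) z = m x (m y z)) \<and>
     (\<forall>a\<in>A. \<forall>b\<in>A. \<forall>d\<in>A. c a (m b d) = m (c a b) d) \<and>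
     (\<forall>a\<in>A. \<forall>b\<in>A. \<forall>d\<in>A. m a (c b d) = c (m a b) (m a d)) \<and>
     (\<forall>s\<in>A. \<forall>t\<in>A. \<forall>v\<in>A. m s (i t v) = i (m s t) (m s v)) \<and>
     (\<forall>s\<in>A. \<forall>t\<in>A. \<forall>v\<in>A. m s (u t v) = u (m s t) (m s v))"

definition hom2 :: "('a \<Rightarrow> 'b) \<Rightarrow> 'a set \<Rightarrow> ('a \<Rightarrow> 'a \<Rightarrow> 'a) \<Rightarrow> ('b \<Rightarrow> 'b \<Rightarrow> 'b) \<Rightarrow> bool" where
  "hom2 h A f g \<longleftrightarrow> (\<forall>x\<in>A. \<forall>y\<in>A. h (f x y) = g (h x) (h y))"

end

theory Submission
  imports Defs
begin

(* Quasi-identities, unlike identities, need not survive passage to a homomorphic image.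
   In the algebra of partial maps f on {p, q} with f q = 0 whenever defined, take
   x = {p \<mapsto> 1, q \<mapsto> 0}, y = {p \<mapsto> 0}, a = {p \<mapsto> 0, q \<mapsto> 0}, b = {p \<mapsto> 0}.
   Then x \<inter> (x \<diamond> y) = {q \<mapsto> 0} distinguishes a from b under composition, but once the
   congruence identifying {q \<mapsto> 0} with the empty map is divided out the premises of the
   quasi-identity hold while x \<circ> a \<noteq> x \<circ> b persists. With the left projection as
   multiplication the same pair of algebras is a pair of 1-stacks. *)

lemma rnb_intersection_update_cancel:
  assumes "rnb_intersection_update A c i u"
    and "x \<in> A" "y \<in> A" "a \<in> A" "b \<in> A"
    and "c (i x (u x y)) a = c (i x (u x y)) b" "c y a = c y b"
  shows "c x a = c x b"
  using assms unfolding rnb_intersection_update_def by blast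

lemma one_stack_iu_imp_rnb_intersection_update:
  "one_stack_iu A m c i u \<Longrightarrow> rnb_intersection_update A c i u"
  unfolding one_stack_iu_def by blast

lemma closed2_left_projection: "closed2 A (\<lambda>x y. x)"
  unfolding closed2_def by blast

lemma hom2_left_projection: "hom2 h A (\<lambda>x y. x) (\<lambda>x y. x)"
  unfolding hom2_def by blast

lemma one_stack_iu_left_projection:
  assumes "rnb_intersection_update A c i u" and "\<forall>x\<in>A. u x x = x"
  shows "one_stack_iu A (\<lambda>x y. x) c i u"
proof -
  have "\<forall>x\<in>A. c x x = x" "\<forall>x\<in>A. i x x = x"
    using assms(1)
    unfolding rnb_intersection_update_def rnb_intersection_def right_normal_band_def
      semilattice_on_def
    by auto
  with assms show ?thesis
    unfolding one_stack_iu_def by (simp add: closed2_left_projection)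
qed

(* The code 2 a + b stands for the partial map f on {p, q} with a = f p (a = 2: p \<notin> dom f)
   and b = 1 iff q \<in> dom f (then f q = 0). Composition restricts the second map to the
   domain of the first, intersection keeps the points where both maps agree, and s \<diamond> t
   overrides s by t inside dom s. *)

definition pmap_codes :: "nat set" where
  "pmap_codes = {0, 1, 2, 3, 4, 5}"

definition pmap_comp :: "nat \<Rightarrow> nat \<Rightarrow> nat" where
  "pmap_comp x y = 2 * (if x div 2 = 2 then 2 else y div 2) + min (x mod 2) (y mod 2)"

definition pmap_inter :: "nat \<Rightarrow> nat \<Rightarrow> nat" where
  "pmap_inter x y = 2 * (if x div 2 = y div 2 then x div 2 else 2) + min (x mod 2) (y mod 2)"

definition pmap_update :: "nat \<Rightarrow> nat \<Rightarrow> nat" where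
  "pmap_update x y =
     2 * (if x div 2 = 2 then 2 else if y div 2 = 2 then x div 2 else y div 2) + x mod 2"

definition pmap_collapse :: "nat \<Rightarrow> nat" where
  "pmap_collapse x = (if x = 5 then 4 else x)"

lemma ball_pmap_codes:
  "(\<forall>x\<in>pmap_codes. P x) \<longleftrightarrow> P 0 \<and> P 1 \<and> P 2 \<and> P 3 \<and> P 4 \<and> P 5"
  by (simp add: pmap_codes_def)

lemma pmap_rnb_intersection_update: "rnb_intersection_update pmap_codes pmap_comp pmap_inter pmap_update"
  unfolding rnb_intersection_update_def rnb_intersection_def right_normal_band_def
    semilattice_on_def closed2_def
  by (simp only: ball_pmap_codes) (simp add: pmap_comp_def pmap_inter_def pmap_update_def pmap_codes_def)

lemma pmap_update_idem: "\<forall>x\<in>pmap_codes. pmap_update x x = x"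
  by (simp add: ball_pmap_codes pmap_update_def)

lemma pmap_collapse_image: "pmap_collapse ` pmap_codes = {0, 1, 2, 3, 4}"
  by (auto simp: pmap_collapse_def pmap_codes_def)

lemma pmap_collapse_hom2:
  "hom2 pmap_collapse pmap_codes pmap_comp (\<lambda>x y. pmap_collapse (pmap_comp x y))"
  "hom2 pmap_collapse pmap_codes pmap_inter (\<lambda>x y. pmap_collapse (pmap_inter x y))"
  "hom2 pmap_collapse pmap_codes pmap_update (\<lambda>x y. pmap_collapse (pmap_update x y))"
  unfolding hom2_def
  by (simp only: ball_pmap_codes; simp add: pmap_comp_def pmap_inter_def pmap_update_def pmap_collapse_def)+

lemma pmap_quotient_closed2:
  "closed2 {0, 1, 2, 3, 4} (\<lambda>x y. pmap_collapse (pmap_comp x y))"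
  "closed2 {0, 1, 2, 3, 4} (\<lambda>x y. pmap_collapse (pmap_inter x y))"
  "closed2 {0, 1, 2, 3, 4} (\<lambda>x y. pmap_collapse (pmap_update x y))"
  unfolding closed2_def
  by (simp; simp add: pmap_comp_def pmap_inter_def pmap_update_def pmap_collapse_def)+

lemma pmap_quotient_not_rnb_intersection_update:
  "\<not> rnb_intersection_update {0, 1, 2, 3, 4} (\<lambda>x y. pmap_collapse (pmap_comp x y))
       (\<lambda>x y. pmap_collapse (pmap_inter x y)) (\<lambda>x y. pmap_collapse (pmap_update x y))"
proof
  assume "rnb_intersection_update {0, 1, 2, 3, 4} (\<lambda>x y. pmap_collapse (pmap_comp x y))
       (\<lambda>x y. pmap_collapse (pmap_inter x y)) (\<lambda>x y. pmap_collapse (pmap_update x y))"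
  from rnb_intersection_update_cancel [OF this, of 3 0 1 0]
  show False
    by (simp add: pmap_comp_def pmap_inter_def pmap_update_def pmap_collapse_def)
qed

theorem proposition5p10:
  shows "(\<exists>(A::nat set) c i u (B::nat set) c' i' u' (h::nat \<Rightarrow> nat).
            rnb_intersection_update A c i u \<and>
            h ` A = B \<and> closed2 B c' \<and> closed2 B i' \<and> closed2 B u' \<and>
            hom2 h A c c' \<and> hom2 h A i i' \<and> hom2 h A u u' \<and>
            \<not> rnb_intersection_update B c' i' u')
       \<and> (\<exists>(A::nat set) m c i u (B::nat set) m' c' i' u' (h::nat \<Rightarrow> nat).
            one_stack_iu A m c i u \<and>
            h ` A = B \<and> closed2 B m' \<and> closed2 B c' \<and> closed2 B i' \<and> closed2 B u' \<and>
            hom2 h A m m' \<and> hom2 h A c c' \<and> hom2 h A i i' \<and> hom2 h A u u' \<and>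
            \<not> one_stack_iu B m' c' i' u')"
proof (intro conjI exI)
  show "rnb_intersection_update pmap_codes pmap_comp pmap_inter pmap_update"
    by (rule pmap_rnb_intersection_update)
  show "one_stack_iu pmap_codes (\<lambda>x y. x) pmap_comp pmap_inter pmap_update"
    using pmap_rnb_intersection_update pmap_update_idem by (rule one_stack_iu_left_projection)
  show "\<not> one_stack_iu {0, 1, 2, 3, 4} (\<lambda>x y. x) (\<lambda>x y. pmap_collapse (pmap_comp x y))
          (\<lambda>x y. pmap_collapse (pmap_inter x y)) (\<lambda>x y. pmap_collapse (pmap_update x y))"
    using pmap_quotient_not_rnb_intersection_update one_stack_iu_imp_rnb_intersection_update
    by blast
qed (rule pmap_collapse_image pmap_quotient_closed2 pmap_collapse_hom2
      pmap_quotient_not_rnb_intersection_update closed2_left_projection hom2_left_projection)+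

end
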